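(* Let $\mathcal{H}$ be a separable Hilbert space and $H$ a positive Hermitian operator on $\mathcal{H}$ with purely discrete spectrum, such that there is no infinite-dimensional subspace on which $H$ is bounded. For $E>0$ let $\mathcal{P}(E)$ be the set of density operators $\rho$ on $\mathcal{H}$ with $\mathrm{Tr}\,\rho H\le E$. Then every sequence in $\mathcal{P}(E)$ has a subsequence that is Cauchy with respect to the Hilbert–Schmidt norm.
   Context: A density operator is a Hermitian, positive semidefinite, trace-class operator of trace 1. $\|A\|_2=\sqrt{\mathrm{Tr}\,A^\dagger A}$ is the Hilbert–Schmidt norm. For positive $\rho$, $\mathrm{Tr}\,\rho H=\sum_n\langle n|\rho|n\rangle E_n$ in an eigenbasis of $H$. *)

theory Defs
  imports "HOL-Analysis.Analysis"
begin

text \<open>Model: the separable Hilbert space is l2 over a countable index type 'i, whose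
standard basis is an eigenbasis of H.  Vectors are functions 'i => complex,
operators (bounded ones) are given by their matrices A i j = <i|A|j>.\<close>

definition l2 :: "('i \<Rightarrow> complex) set" where
  "l2 = {x. (\<lambda>i. (cmod (x i))\<^sup>2) summable_on UNIV}"

definition l2_norm :: "('i \<Rightarrow> complex) \<Rightarrow> real" where
  "l2_norm x = sqrt (\<Sum>\<^sub>\<infinity>i. (cmod (x i))\<^sup>2)"

definition H_dom :: "('i \<Rightarrow> real) \<Rightarrow> ('i \<Rightarrow> complex) set" where
  "H_dom ev = {x \<in> l2. (\<lambda>i. of_real (ev i) * x i) \<in> l2}"

definition H_app :: "('i \<Rightarrow> real) \<Rightarrow> ('i \<Rightarrow> complex) \<Rightarrow> ('i \<Rightarrow> complex)" where
  "H_app ev x = (\<lambda>i. of_real (ev i) * x i)"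

definition is_subspace :: "('i \<Rightarrow> complex) set \<Rightarrow> bool" where
  "is_subspace V \<longleftrightarrow> V \<subseteq> l2 \<and> (\<lambda>i. 0) \<in> V \<and>
     (\<forall>x\<in>V. \<forall>y\<in>V. (\<lambda>i. x i + y i) \<in> V) \<and>
     (\<forall>c::complex. \<forall>x\<in>V. (\<lambda>i. c * x i) \<in> V)"

definition finite_dimensional :: "('i \<Rightarrow> complex) set \<Rightarrow> bool" where
  "finite_dimensional V \<longleftrightarrow>
     (\<exists>B. finite B \<and> B \<subseteq> V \<and> (\<forall>x\<in>V. \<exists>c. x = (\<lambda>i. \<Sum>b\<in>B. c b * b i)))"

definition no_inf_dim_bounded_subspace :: "('i \<Rightarrow> real) \<Rightarrow> bool" where
  "no_inf_dim_bounded_subspace ev \<longleftrightarrow>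
     (\<forall>V. is_subspace V \<and> V \<subseteq> H_dom ev \<and>
          (\<exists>C. \<forall>x\<in>V. l2_norm (H_app ev x) \<le> C * l2_norm x)
          \<longrightarrow> finite_dimensional V)"

text \<open>Density operators, given by their matrices: Hermitian, positive semidefinite,
trace class (for positive operators: summable diagonal) with trace 1.\<close>

definition density_operator :: "('i \<Rightarrow> 'i \<Rightarrow> complex) \<Rightarrow> bool" where
  "density_operator \<rho> \<longleftrightarrow>
     (\<forall>i j. \<rho> j i = cnj (\<rho> i j)) \<and>
     (\<forall>x::'i \<Rightarrow> complex. finite {i. x i \<noteq> 0} \<longrightarrow>
        0 \<le> Re (\<Sum>i\<in>{i. x i \<noteq> 0}. \<Sum>j\<in>{i. x i \<noteq> 0}. cnj (x i) * \<rho> i j * x j)) \<and>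
     ((\<lambda>i. Re (\<rho> i i)) has_sum 1) UNIV"

text \<open>Tr (rho H) = sum_n <n|rho|n> E_n in the eigenbasis.\<close>

definition energy :: "('i \<Rightarrow> real) \<Rightarrow> ('i \<Rightarrow> 'i \<Rightarrow> complex) \<Rightarrow> real" where
  "energy ev \<rho> = (\<Sum>\<^sub>\<infinity>i. Re (\<rho> i i) * ev i)"

definition energy_finite :: "('i \<Rightarrow> real) \<Rightarrow> ('i \<Rightarrow> 'i \<Rightarrow> complex) \<Rightarrow> bool" where
  "energy_finite ev \<rho> \<longleftrightarrow> (\<lambda>i. Re (\<rho> i i) * ev i) summable_on UNIV"

definition P_E :: "('i \<Rightarrow> real) \<Rightarrow> real \<Rightarrow> ('i \<Rightarrow> 'i \<Rightarrow> complex) set" where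
  "P_E ev E = {\<rho>. density_operator \<rho> \<and> energy_finite ev \<rho> \<and> energy ev \<rho> \<le> E}"

definition hs_norm :: "('i \<Rightarrow> 'i \<Rightarrow> complex) \<Rightarrow> real" where
  "hs_norm A = sqrt (\<Sum>\<^sub>\<infinity>(i,j). (cmod (A i j))\<^sup>2)"

end

theory Submission
  imports Defs "HOL-Library.Function_Algebras"
begin

text \<open>
  Positivity of a density operator \<open>\<rho>\<close> gives \<open>|\<rho>\<^sub>i\<^sub>j|\<^sup>2 \<le> \<rho>\<^sub>i\<^sub>i \<rho>\<^sub>j\<^sub>j\<close>, so all entries are bounded by 1
  and compactness of a countable product of discs yields an entrywise convergent subsequence.  Since \<open>H\<close> is bounded
  on no infinite-dimensional subspace, only finitely many eigenvalues \<open>E\<^sub>i\<close> lie below any \<open>M\<close>,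
  and \<open>Tr \<rho>H \<le> E\<close> gives \<open>\<Sum>\<^bsub>E\<^sub>i > M\<^esub> \<rho>\<^sub>i\<^sub>i \<le> E/M\<close>.  Hence the Hilbert-Schmidt mass of \<open>\<rho>\<close>
  outside the finite block \<open>{E\<^sub>i \<le> M}\<^sup>2\<close> is at most \<open>2E/M\<close>, uniformly on \<open>P(E)\<close>.
  Entrywise convergence on that block plus uniformly small tails makes the subsequence
  Hilbert-Schmidt Cauchy.
\<close>

section \<open>Square-summable families with uniformly small tails\<close>

lemma compact_valued_seq_has_pointwise_convergent_subseq:
  fixes f :: "nat \<Rightarrow> 'a::countable \<Rightarrow> 'b::metric_space"
  assumes "compact S" and "\<And>n z. f n z \<in> S"
  shows "\<exists>r l. strict_mono r \<and> (\<forall>z. (\<lambda>n. f (r n) z) \<longlonglongrightarrow> l z)"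
proof -
  let ?K = "PiE UNIV (\<lambda>_::'a. S)"
  have "compactin (product_topology (\<lambda>_. euclidean) UNIV) ?K"
    using \<open>compact S\<close> by (subst compactin_PiE) (auto simp: compactin_euclidean_iff)
  then have "seq_compact ?K"
    by (simp add: euclidean_product_topology compactin_euclidean_iff compact_imp_seq_compact)
  moreover have "f n \<in> ?K" for n using assms(2) by auto
  ultimately obtain l r where "strict_mono r" "(f \<circ> r) \<longlonglongrightarrow> l"
    unfolding seq_compact_def by metis
  moreover have "(\<lambda>n. f (r n) z) \<longlonglongrightarrow> l z" for z
  proof -
    have "isCont (\<lambda>x. x z) l"
      using continuous_on_product_coordinates by (metis continuous_on_eq_continuous_at open_UNIV UNIV_I)
    from isCont_tendsto_compose[OF this \<open>(f \<circ> r) \<longlonglongrightarrow> l\<close>] show ?thesis by (simp add: o_def)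
  qed
  ultimately show ?thesis by blast
qed

lemma infsum_le_of_finite_sums:
  fixes f :: "'a \<Rightarrow> real"
  assumes "\<And>z. 0 \<le> f z" and "\<And>G. finite G \<Longrightarrow> sum f G \<le> C"
  shows "infsum f UNIV \<le> C"
proof (rule infsum_le_finite_sums)
  show "f summable_on UNIV"
    using assms by (intro nonneg_bdd_above_summable_on bdd_aboveI2) auto
qed (use assms in auto)

lemma norm_diff_squared_le: "(norm (a - b))\<^sup>2 \<le> 2 * (norm a)\<^sup>2 + 2 * (norm b)\<^sup>2"
proof -
  have "(norm (a - b))\<^sup>2 \<le> (norm a + norm b)\<^sup>2"
    by (simp add: norm_triangle_ineq4 power_mono)
  also have "\<dots> \<le> 2 * (norm a)\<^sup>2 + 2 * (norm b)\<^sup>2"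
    using zero_le_power2[of "norm a - norm b"] by (simp add: power2_eq_square algebra_simps)
  finally show ?thesis .
qed

lemma infsum_norm_diff_squared_le_core_plus_tails:
  fixes f g :: "'a \<Rightarrow> 'b::real_normed_vector"
  assumes "finite K"
    and f: "\<And>G. finite G \<Longrightarrow> G \<inter> K = {} \<Longrightarrow> (\<Sum>z\<in>G. (norm (f z))\<^sup>2) \<le> \<delta>"
    and g: "\<And>G. finite G \<Longrightarrow> G \<inter> K = {} \<Longrightarrow> (\<Sum>z\<in>G. (norm (g z))\<^sup>2) \<le> \<delta>"
  shows "(\<Sum>\<^sub>\<infinity>z. (norm (f z - g z))\<^sup>2) \<le> (\<Sum>z\<in>K. (norm (f z - g z))\<^sup>2) + 4 * \<delta>"
proof (rule infsum_le_of_finite_sums)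
  fix G :: "'a set" assume "finite G"
  let ?d = "\<lambda>z. (norm (f z - g z))\<^sup>2"
  have "sum ?d G = sum ?d (G \<inter> K) + sum ?d (G - K)"
    using \<open>finite G\<close> by (rule sum.Int_Diff)
  also have "sum ?d (G \<inter> K) \<le> sum ?d K"
    using \<open>finite K\<close> by (intro sum_mono2) auto
  also have "sum ?d (G - K) \<le> (\<Sum>z\<in>G - K. 2 * (norm (f z))\<^sup>2 + 2 * (norm (g z))\<^sup>2)"
    by (intro sum_mono norm_diff_squared_le)
  also have "\<dots> = 2 * (\<Sum>z\<in>G - K. (norm (f z))\<^sup>2) + 2 * (\<Sum>z\<in>G - K. (norm (g z))\<^sup>2)"
    by (simp add: sum.distrib sum_distrib_left)
  also have "\<dots> \<le> 2 * \<delta> + 2 * \<delta>"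
  proof -
    have GK: "finite (G - K)" "(G - K) \<inter> K = {}" using \<open>finite G\<close> by auto
    show ?thesis using f[OF GK] g[OF GK] by linarith
  qed
  finally show "sum ?d G \<le> sum ?d K + 4 * \<delta>" by simp
qed simp

lemma equismall_tails_imp_l2_Cauchy_subseq:
  fixes f :: "nat \<Rightarrow> 'a::countable \<Rightarrow> 'b::{real_normed_vector,heine_borel}"
  assumes bounded: "\<And>n z. norm (f n z) \<le> B"
    and tails: "\<And>\<delta>. 0 < \<delta> \<Longrightarrow> \<exists>K. finite K \<and>
      (\<forall>n G. finite G \<longrightarrow> G \<inter> K = {} \<longrightarrow> (\<Sum>z\<in>G. (norm (f n z))\<^sup>2) \<le> \<delta>)"
  shows "\<exists>r::nat \<Rightarrow> nat. strict_mono r \<and>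
    (\<forall>\<epsilon>>0. \<exists>N. \<forall>m\<ge>N. \<forall>n\<ge>N. sqrt (\<Sum>\<^sub>\<infinity>z. (norm (f (r m) z - f (r n) z))\<^sup>2) < \<epsilon>)"
proof -
  obtain r l where "strict_mono r" and lim: "\<And>z. (\<lambda>n. f (r n) z) \<longlonglongrightarrow> l z"
    using compact_valued_seq_has_pointwise_convergent_subseq[of "cball 0 B" f] bounded by auto
  have "\<forall>\<epsilon>>0. \<exists>N. \<forall>m\<ge>N. \<forall>n\<ge>N. sqrt (\<Sum>\<^sub>\<infinity>z. (norm (f (r m) z - f (r n) z))\<^sup>2) < \<epsilon>"
  proof (intro allI impI)
    fix \<epsilon> :: real assume "0 < \<epsilon>"
    define \<eta> where "\<eta> = \<epsilon>\<^sup>2 / 8"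
    have "0 < \<eta>" using \<open>0 < \<epsilon>\<close> by (simp add: \<eta>_def)
    obtain K where "finite K"
      and K: "\<And>n G. finite G \<Longrightarrow> G \<inter> K = {} \<Longrightarrow> (\<Sum>z\<in>G. (norm (f n z))\<^sup>2) \<le> \<eta>"
      using tails[OF \<open>0 < \<eta>\<close>] by auto
    define h where "h n = (\<Sum>z\<in>K. (norm (f (r n) z - l z))\<^sup>2)" for n
    have "h \<longlonglongrightarrow> (\<Sum>z\<in>K. (norm (l z - l z))\<^sup>2)"
      unfolding h_def by (intro tendsto_intros lim)
    then have "\<forall>\<^sub>F n in sequentially. h n < \<eta>"
      using \<open>0 < \<eta>\<close> by (intro order_tendstoD(2)) auto
    then obtain N where N: "\<And>n. n \<ge> N \<Longrightarrow> h n < \<eta>"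
      unfolding eventually_sequentially by blast
    have "sqrt (\<Sum>\<^sub>\<infinity>z. (norm (f (r m) z - f (r n) z))\<^sup>2) < \<epsilon>" if "m \<ge> N" "n \<ge> N" for m n
    proof (rule real_less_lsqrt)
      have "(\<Sum>z\<in>K. (norm (f (r m) z - f (r n) z))\<^sup>2)
          \<le> (\<Sum>z\<in>K. 2 * (norm (f (r m) z - l z))\<^sup>2 + 2 * (norm (f (r n) z - l z))\<^sup>2)"
        using norm_diff_squared_le[of "f (r m) z - l z" "f (r n) z - l z" for z]
        by (intro sum_mono) simp
      also have "\<dots> = 2 * h m + 2 * h n"
        by (simp add: h_def sum.distrib sum_distrib_left)
      finally show "(\<Sum>\<^sub>\<infinity>z. (norm (f (r m) z - f (r n) z))\<^sup>2) < \<epsilon>\<^sup>2"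
        using infsum_norm_diff_squared_le_core_plus_tails[OF \<open>finite K\<close> K K, of "r m" "r n"]
          N[OF \<open>m \<ge> N\<close>] N[OF \<open>n \<ge> N\<close>] unfolding \<eta>_def by linarith
    qed (use \<open>0 < \<epsilon>\<close> in linarith)
    then show "\<exists>N. \<forall>m\<ge>N. \<forall>n\<ge>N. sqrt (\<Sum>\<^sub>\<infinity>z. (norm (f (r m) z - f (r n) z))\<^sup>2) < \<epsilon>"
      by blast
  qed
  with \<open>strict_mono r\<close> show ?thesis by blast
qed

section \<open>Positive matrices\<close>

definition positive_matrix :: "('i \<Rightarrow> 'i \<Rightarrow> complex) \<Rightarrow> bool" where
  "positive_matrix A \<longleftrightarrow>
     (\<forall>i j. A j i = cnj (A i j)) \<and>
     (\<forall>x::'i \<Rightarrow> complex. finite {i. x i \<noteq> 0} \<longrightarrow>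
        0 \<le> Re (\<Sum>i\<in>{i. x i \<noteq> 0}. \<Sum>j\<in>{i. x i \<noteq> 0}. cnj (x i) * A i j * x j))"

lemma density_operator_iff:
  "density_operator \<rho> \<longleftrightarrow> positive_matrix \<rho> \<and> ((\<lambda>i. Re (\<rho> i i)) has_sum 1) UNIV"
  by (simp only: density_operator_def positive_matrix_def conj_assoc)

lemma positive_matrix_hermitian: "positive_matrix A \<Longrightarrow> A j i = cnj (A i j)"
  unfolding positive_matrix_def by blast

lemma positive_matrix_quadratic_form_nonneg:
  assumes A: "positive_matrix A" and S: "finite S" and supp: "\<And>k. k \<notin> S \<Longrightarrow> x k = 0"
  shows "0 \<le> Re (\<Sum>k\<in>S. \<Sum>l\<in>S. cnj (x k) * A k l * x l)"
proof -
  let ?X = "{i. x i \<noteq> 0}"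
  have "?X \<subseteq> S" using supp by auto
  have "(\<Sum>k\<in>?X. \<Sum>l\<in>?X. cnj (x k) * A k l * x l) = (\<Sum>k\<in>S. \<Sum>l\<in>?X. cnj (x k) * A k l * x l)"
    using S \<open>?X \<subseteq> S\<close> by (intro sum.mono_neutral_left) auto
  also have "\<dots> = (\<Sum>k\<in>S. \<Sum>l\<in>S. cnj (x k) * A k l * x l)"
    using S \<open>?X \<subseteq> S\<close> by (intro sum.cong refl sum.mono_neutral_left) auto
  finally have "(\<Sum>k\<in>?X. \<Sum>l\<in>?X. cnj (x k) * A k l * x l) = (\<Sum>k\<in>S. \<Sum>l\<in>S. cnj (x k) * A k l * x l)" .
  moreover have "finite ?X" using \<open>?X \<subseteq> S\<close> S by (rule finite_subset)
  then have "0 \<le> Re (\<Sum>k\<in>?X. \<Sum>l\<in>?X. cnj (x k) * A k l * x l)"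
    using A unfolding positive_matrix_def by blast
  ultimately show ?thesis by simp
qed

lemma positive_matrix_diag_Im: "positive_matrix A \<Longrightarrow> Im (A i i) = 0"
  using positive_matrix_hermitian[of A i i] by (metis Reals_cnj_iff complex_is_Real_iff)

lemma positive_matrix_diag_nonneg: "positive_matrix A \<Longrightarrow> 0 \<le> Re (A i i)"
  using positive_matrix_quadratic_form_nonneg[of A "{i}" "\<lambda>k. if k = i then 1 else 0"] by simp

lemma quadratic_nonneg_imp_le:
  fixes P Q b :: real
  assumes nonneg: "\<And>t. 0 \<le> P * t\<^sup>2 - 2 * b * t + Q * b" and "0 \<le> b" "0 \<le> Q"
  shows "b \<le> P * Q"
proof (cases "Q = 0")
  case False
  have "0 \<le> Q * (P * Q - b)"
    using nonneg[of Q] by (simp add: power2_eq_square algebra_simps)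
  with False \<open>0 \<le> Q\<close> show ?thesis by (simp add: zero_le_mult_iff)
next
  case True
  have "b \<le> 0"
  proof (rule ccontr)
    assume "\<not> b \<le> 0"
    define t where "t = b / (\<bar>P\<bar> + 1)"
    have "0 < t" using \<open>\<not> b \<le> 0\<close> by (simp add: t_def)
    have "P * t \<le> \<bar>P\<bar> * t" using \<open>0 < t\<close> by (simp add: mult_right_mono)
    also have "\<dots> < (\<bar>P\<bar> + 1) * t" using \<open>0 < t\<close> by simp
    also have "\<dots> < 2 * b" using \<open>\<not> b \<le> 0\<close> by (simp add: t_def)
    finally have "t * (P * t - 2 * b) < 0"
      using \<open>0 < t\<close> by (simp add: mult_pos_neg)
    with nonneg[of t] True show False by (simp add: power2_eq_square algebra_simps)
  qed
  with \<open>0 \<le> b\<close> True show ?thesis by simp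
qed

lemma positive_matrix_entry_bound:
  assumes A: "positive_matrix A"
  shows "(cmod (A i j))\<^sup>2 \<le> Re (A i i) * Re (A j j)"
proof (cases "i = j")
  case True
  then show ?thesis
    using cmod_eq_Re[OF positive_matrix_diag_Im[OF A, of j]] by (simp add: power2_eq_square)
next
  case False
  define c where "c = A i j"
  have "0 \<le> Re (A i i) * t\<^sup>2 - 2 * (cmod c)\<^sup>2 * t + Re (A j j) * (cmod c)\<^sup>2" for t
  proof -
    define x where "x k = (if k = i then of_real t else if k = j then - cnj c else 0)" for k
    have "0 \<le> Re (\<Sum>k\<in>{i,j}. \<Sum>l\<in>{i,j}. cnj (x k) * A k l * x l)"
      by (rule positive_matrix_quadratic_form_nonneg[OF A]) (auto simp: x_def)
    also have "\<dots> = Re (A i i) * t\<^sup>2 - 2 * (cmod c)\<^sup>2 * t + Re (A j j) * (cmod c)\<^sup>2"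
      using False unfolding cmod_power2
      by (simp add: x_def c_def positive_matrix_hermitian[OF A, of i j] power2_eq_square algebra_simps)
    finally show ?thesis .
  qed
  then show ?thesis
    by (fold c_def, intro quadratic_nonneg_imp_le) (simp_all add: positive_matrix_diag_nonneg[OF A])
qed

lemma density_operator_diag_sum_le_1:
  assumes "density_operator \<rho>" and "finite S"
  shows "(\<Sum>i\<in>S. Re (\<rho> i i)) \<le> 1"
proof -
  have "((\<lambda>i. Re (\<rho> i i)) has_sum 1) UNIV" and "positive_matrix \<rho>"
    using assms(1) by (auto simp: density_operator_iff)
  then show ?thesis
    using assms(2) by (intro has_sum_mono_neutral[OF has_sum_finite[of S]]) (auto simp: positive_matrix_diag_nonneg)
qed

lemma density_operator_entry_le_1:
  assumes "density_operator \<rho>"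
  shows "cmod (\<rho> i j) \<le> 1"
proof -
  have A: "positive_matrix \<rho>" using assms by (simp add: density_operator_iff)
  have "Re (\<rho> k k) \<le> 1" for k
    using density_operator_diag_sum_le_1[OF assms, of "{k}"] by simp
  then have "Re (\<rho> i i) * Re (\<rho> j j) \<le> 1"
    by (intro mult_le_one) (simp_all add: positive_matrix_diag_nonneg[OF A])
  then have "(cmod (\<rho> i j))\<^sup>2 \<le> 1"
    using positive_matrix_entry_bound[OF A, of i j] by linarith
  then show ?thesis by (simp add: power_le_one_iff abs_le_square_iff)
qed

section \<open>Finiteness of sublevel sets of the eigenvalues\<close>

definition unit_vector :: "'i \<Rightarrow> 'i \<Rightarrow> complex" where
  "unit_vector t = (\<lambda>i. if i = t then 1 else 0)"

definition fun_scale :: "complex \<Rightarrow> ('i \<Rightarrow> complex) \<Rightarrow> 'i \<Rightarrow> complex" where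
  "fun_scale c x = (\<lambda>i. c * x i)"

lemma sum_fun_apply: "(\<Sum>a\<in>A. f a) i = (\<Sum>a\<in>A. f a i)"
  by (induction A rule: infinite_finite_induct) auto

lemma vector_space_fun_scale: "vector_space fun_scale"
  by unfold_locales (auto simp: fun_scale_def algebra_simps fun_eq_iff)

interpretation fun_space: vector_space fun_scale
  by (rule vector_space_fun_scale)

lemma independent_unit_vectors: "fun_space.independent (unit_vector ` T)"
  unfolding fun_space.independent_explicit_finite_subsets
proof (intro allI impI ballI)
  fix U u v
  assume U: "U \<subseteq> unit_vector ` T" "finite U" "(\<Sum>w\<in>U. fun_scale (u w) w) = 0" and "v \<in> U"
  then obtain t where t: "v = unit_vector t" by auto
  have "0 = (\<Sum>w\<in>U. u w * w t)"
    using fun_cong[OF U(3), of t] by (simp add: sum_fun_apply fun_scale_def)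
  also have "\<dots> = u v * v t + (\<Sum>w\<in>U - {v}. u w * w t)"
    using U(2) \<open>v \<in> U\<close> by (simp add: sum.remove)
  also have "(\<Sum>w\<in>U - {v}. u w * w t) = 0"
  proof (intro sum.neutral ballI)
    fix w assume "w \<in> U - {v}"
    then obtain t' where "w = unit_vector t'" "t' \<noteq> t" using U(1) t by auto
    then show "u w * w t = 0" by (simp add: unit_vector_def)
  qed
  finally show "u v = 0" using t by (simp add: unit_vector_def)
qed

lemma finite_dimensional_unit_vectors_finite:
  assumes fd: "finite_dimensional V" and unit: "\<And>t. t \<in> S \<Longrightarrow> unit_vector t \<in> V"
  shows "finite S"
proof (rule ccontr)
  assume "infinite S"
  obtain B where B: "finite B" "B \<subseteq> V" "\<And>x. x \<in> V \<Longrightarrow> \<exists>c. x = (\<lambda>i. \<Sum>b\<in>B. c b * b i)"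
    using fd unfolding finite_dimensional_def by blast
  obtain T where T: "finite T" "card T = Suc (card B)" "T \<subseteq> S"
    using infinite_arbitrarily_large[OF \<open>infinite S\<close>] by blast
  have span: "unit_vector ` T \<subseteq> fun_space.span B"
  proof
    fix v assume "v \<in> unit_vector ` T"
    then obtain c where "v = (\<lambda>i. \<Sum>b\<in>B. c b * b i)" using B T unit by blast
    then have "v = (\<Sum>b\<in>B. fun_scale (c b) b)"
      by (simp add: fun_eq_iff fun_scale_def sum_fun_apply)
    then show "v \<in> fun_space.span B"
      by (simp add: fun_space.span_sum fun_space.span_scale fun_space.span_base)
  qed
  have "card (unit_vector ` T) = Suc (card B)"
    using T by (subst card_image) (auto simp: inj_on_def unit_vector_def fun_eq_iff split: if_splits)
  then show False
    using fun_space.independent_span_bound[OF B(1) independent_unit_vectors span] by simp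
qed

lemma finite_support_in_l2: "finite {i. x i \<noteq> 0} \<Longrightarrow> x \<in> l2"
proof -
  assume "finite {i. x i \<noteq> 0}"
  then have "(\<lambda>i. (cmod (x i))\<^sup>2) summable_on {i. x i \<noteq> 0}" by simp
  then show "x \<in> l2"
    by (subst (asm) summable_on_cong_neutral[where T=UNIV]) (auto simp: l2_def)
qed

lemma is_subspace_finite_support:
  "is_subspace {x. finite {i. x i \<noteq> 0} \<and> {i. x i \<noteq> 0} \<subseteq> S}" (is "is_subspace ?V")
  unfolding is_subspace_def
proof (intro conjI ballI allI subsetI)
  fix x y assume "x \<in> ?V" "y \<in> ?V"
  moreover have "{i. x i + y i \<noteq> 0} \<subseteq> {i. x i \<noteq> 0} \<union> {i. y i \<noteq> 0}" by auto
  ultimately show "(\<lambda>i. x i + y i) \<in> ?V"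
    by (simp only: mem_Collect_eq) (meson finite_UnI finite_subset le_sup_iff order_trans)
next
  fix c :: complex and x assume "x \<in> ?V"
  moreover have "{i. c * x i \<noteq> 0} \<subseteq> {i. x i \<noteq> 0}" by auto
  ultimately show "(\<lambda>i. c * x i) \<in> ?V"
    by (simp only: mem_Collect_eq) (meson finite_subset order_trans)
qed (auto intro: finite_support_in_l2)

lemma H_app_bounded:
  assumes x: "x \<in> l2" and bound: "\<And>i. x i \<noteq> 0 \<Longrightarrow> \<bar>ev i\<bar> \<le> M"
  shows "H_app ev x \<in> l2" and "l2_norm (H_app ev x) \<le> M * l2_norm x"
proof -
  have M: "0 \<le> M" if "x \<noteq> (\<lambda>i. 0)"
    using that bound by (auto intro: order_trans[OF abs_ge_zero])
  have le: "(cmod (H_app ev x i))\<^sup>2 \<le> M\<^sup>2 * (cmod (x i))\<^sup>2" for i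
  proof (cases "x i = 0")
    case False
    then have "(ev i)\<^sup>2 \<le> M\<^sup>2"
      using bound[of i] power_mono[of "\<bar>ev i\<bar>" M 2] by simp
    then show ?thesis by (simp add: H_app_def norm_mult power_mult_distrib mult_right_mono)
  qed (simp add: H_app_def)
  have sx: "(\<lambda>i. M\<^sup>2 * (cmod (x i))\<^sup>2) summable_on UNIV"
    using x by (simp add: l2_def summable_on_cmult_right)
  then have sH: "(\<lambda>i. (cmod (H_app ev x i))\<^sup>2) summable_on UNIV"
    by (rule summable_on_comparison_test) (use le in auto)
  then show "H_app ev x \<in> l2" by (simp add: l2_def)
  show "l2_norm (H_app ev x) \<le> M * l2_norm x"
  proof (cases "x = (\<lambda>i. 0)")
    case True
    then show ?thesis by (simp add: l2_norm_def H_app_def)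
  next
    case False
    have "(\<Sum>\<^sub>\<infinity>i. (cmod (H_app ev x i))\<^sup>2) \<le> M\<^sup>2 * (\<Sum>\<^sub>\<infinity>i. (cmod (x i))\<^sup>2)"
      using infsum_mono[OF sH sx le] by (simp add: infsum_cmult_right')
    then have "l2_norm (H_app ev x) \<le> sqrt (M\<^sup>2 * (\<Sum>\<^sub>\<infinity>i. (cmod (x i))\<^sup>2))"
      unfolding l2_norm_def by (rule real_sqrt_le_mono)
    then show ?thesis
      using M[OF False] by (simp add: l2_norm_def real_sqrt_mult)
  qed
qed

lemma no_inf_dim_bounded_subspace_finite_sublevel:
  assumes "no_inf_dim_bounded_subspace ev"
  shows "finite {i. \<bar>ev i\<bar> \<le> M}"
proof -
  define V where "V = {x. finite {i. x i \<noteq> (0::complex)} \<and> {i. x i \<noteq> 0} \<subseteq> {i. \<bar>ev i\<bar> \<le> M}}"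
  have bounded: "H_app ev x \<in> l2 \<and> l2_norm (H_app ev x) \<le> M * l2_norm x" if "x \<in> V" for x
    using H_app_bounded[of x ev M] that by (auto simp: V_def intro: finite_support_in_l2)
  then have "V \<subseteq> H_dom ev" and "\<forall>x\<in>V. l2_norm (H_app ev x) \<le> M * l2_norm x"
    by (auto simp: H_dom_def H_app_def V_def intro: finite_support_in_l2)
  then have "finite_dimensional V"
    using assms is_subspace_finite_support unfolding no_inf_dim_bounded_subspace_def V_def by blast
  moreover have "unit_vector t \<in> V" if "\<bar>ev t\<bar> \<le> M" for t
    using that by (auto simp: V_def unit_vector_def)
  ultimately show ?thesis
    by (rule finite_dimensional_unit_vectors_finite) simp
qed

section \<open>Uniform tails of energy-bounded density operators\<close>

lemma P_E_diag_sum_le: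
  assumes "\<rho> \<in> P_E ev E" and ev: "\<And>i. 0 \<le> ev i" and "finite S" and M: "0 < M"
    and high: "\<And>i. i \<in> S \<Longrightarrow> M < ev i"
  shows "(\<Sum>i\<in>S. Re (\<rho> i i)) \<le> E / M"
proof -
  have pos: "positive_matrix \<rho>" and energy: "(\<lambda>i. Re (\<rho> i i) * ev i) summable_on UNIV"
    "energy ev \<rho> \<le> E"
    using assms(1) by (auto simp: P_E_def density_operator_iff energy_finite_def)
  have "M * Re (\<rho> i i) \<le> Re (\<rho> i i) * ev i" if "i \<in> S" for i
    using high[OF that] positive_matrix_diag_nonneg[OF pos, of i]
    by (simp add: mult.commute mult_right_mono)
  then have "M * (\<Sum>i\<in>S. Re (\<rho> i i)) \<le> (\<Sum>i\<in>S. Re (\<rho> i i) * ev i)"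
    unfolding sum_distrib_left by (rule sum_mono)
  also have "\<dots> = (\<Sum>\<^sub>\<infinity>i\<in>S. Re (\<rho> i i) * ev i)"
    using \<open>finite S\<close> by simp
  also have "\<dots> \<le> energy ev \<rho>"
    unfolding energy_def using energy(1) \<open>finite S\<close>
    by (intro infsum_mono_neutral) (auto simp: ev positive_matrix_diag_nonneg[OF pos])
  finally show ?thesis
    using energy(2) M by (simp add: field_simps)
qed

lemma sum_product_outside_square_le:
  fixes p :: "'a \<Rightarrow> real"
  assumes nonneg: "\<And>i. 0 \<le> p i" and total: "\<And>S. finite S \<Longrightarrow> sum p S \<le> 1"
    and tail: "\<And>S. finite S \<Longrightarrow> S \<inter> L = {} \<Longrightarrow> sum p S \<le> \<eta>"
    and "finite G" and G: "G \<inter> L \<times> L = {}"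
  shows "(\<Sum>(i,j)\<in>G. p i * p j) \<le> 2 * \<eta>"
proof -
  define I where "I = fst ` G \<union> snd ` G"
  have I: "finite I" using \<open>finite G\<close> by (simp add: I_def)
  let ?f = "\<lambda>(i,j). p i * p j"
  have f: "0 \<le> ?f z" for z using nonneg by (auto split: prod.split)
  have "G \<subseteq> (I - L) \<times> I \<union> I \<times> (I - L)"
  proof
    fix z assume "z \<in> G"
    moreover obtain i j where "z = (i, j)" by fastforce
    ultimately have "i \<in> I" "j \<in> I" "i \<notin> L \<or> j \<notin> L"
      using G unfolding I_def by (force, force, blast)
    with \<open>z = (i, j)\<close> show "z \<in> (I - L) \<times> I \<union> I \<times> (I - L)" by blast
  qed
  then have "sum ?f G \<le> sum ?f ((I - L) \<times> I \<union> I \<times> (I - L))"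
    using I f by (intro sum_mono2) auto
  also have "\<dots> \<le> sum ?f ((I - L) \<times> I) + sum ?f (I \<times> (I - L))"
    using I f by (simp add: sum_Un sum_nonneg)
  also have "\<dots> = sum p (I - L) * sum p I + sum p I * sum p (I - L)"
    by (simp add: sum_product sum.cartesian_product)
  also have "\<dots> \<le> \<eta> * 1 + 1 * \<eta>"
    using I nonneg tail[of "{}"] by (intro add_mono mult_mono total tail) (auto intro: sum_nonneg)
  finally show ?thesis by simp
qed

lemma P_E_hs_tail_le:
  assumes "\<rho> \<in> P_E ev E" and ev: "\<And>i. 0 \<le> ev i" and M: "0 < M"
    and "finite G" and G: "G \<inter> {i. ev i \<le> M} \<times> {i. ev i \<le> M} = {}"
  shows "(\<Sum>(i,j)\<in>G. (cmod (\<rho> i j))\<^sup>2) \<le> 2 * (E / M)"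
proof -
  have \<rho>: "density_operator \<rho>" and pos: "positive_matrix \<rho>"
    using assms(1) by (auto simp: P_E_def density_operator_iff)
  have "(\<Sum>(i,j)\<in>G. (cmod (\<rho> i j))\<^sup>2) \<le> (\<Sum>(i,j)\<in>G. Re (\<rho> i i) * Re (\<rho> j j))"
    by (intro sum_mono) (auto simp: positive_matrix_entry_bound[OF pos])
  also have "\<dots> \<le> 2 * (E / M)"
  proof (rule sum_product_outside_square_le[OF _ _ _ \<open>finite G\<close> G])
    fix S :: "'a set" assume "finite S" and "S \<inter> {i. ev i \<le> M} = {}"
    then show "(\<Sum>i\<in>S. Re (\<rho> i i)) \<le> E / M"
      by (intro P_E_diag_sum_le[OF assms(1) ev _ M]) auto
  qed (simp_all add: positive_matrix_diag_nonneg[OF pos] density_operator_diag_sum_le_1[OF \<rho>])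
  finally show ?thesis .
qed

lemma P_E_hs_tails_uniformly_small:
  assumes ev: "\<And>i. 0 \<le> ev i" and "no_inf_dim_bounded_subspace ev" and "0 < E" and "0 < \<delta>"
  shows "\<exists>K. finite K \<and> (\<forall>\<rho>\<in>P_E ev E. \<forall>G. finite G \<longrightarrow> G \<inter> K = {} \<longrightarrow>
    (\<Sum>z\<in>G. (cmod (case_prod \<rho> z))\<^sup>2) \<le> \<delta>)"
proof (intro exI conjI ballI allI impI)
  define M where "M = 2 * E / \<delta>"
  have "0 < M" using assms(3,4) by (simp add: M_def)
  have "{i. ev i \<le> M} = {i. \<bar>ev i\<bar> \<le> M}" using ev by simp
  then show "finite ({i. ev i \<le> M} \<times> {i. ev i \<le> M})"
    using no_inf_dim_bounded_subspace_finite_sublevel[OF assms(2)] by simp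
  fix \<rho> G assume "\<rho> \<in> P_E ev E" "finite G" "G \<inter> {i. ev i \<le> M} \<times> {i. ev i \<le> M} = {}"
  then have "(\<Sum>(i, j)\<in>G. (cmod (\<rho> i j))\<^sup>2) \<le> 2 * (E / M)"
    by (rule P_E_hs_tail_le[OF _ ev \<open>0 < M\<close>])
  also have "2 * (E / M) = \<delta>" using assms(3,4) by (simp add: M_def)
  finally show "(\<Sum>z\<in>G. (cmod (case_prod \<rho> z))\<^sup>2) \<le> \<delta>"
    by (simp add: case_prod_beta)
qed

lemma hs_norm_diff_eq:
  "hs_norm (\<lambda>i j. A i j - B i j) = sqrt (\<Sum>\<^sub>\<infinity>z. (cmod (case_prod A z - case_prod B z))\<^sup>2)"
  by (simp add: hs_norm_def case_prod_beta case_prod_beta')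

theorem mainTheorem9:
  fixes ev :: "'i::countable \<Rightarrow> real" and E :: real
    and \<rho> :: "nat \<Rightarrow> 'i \<Rightarrow> 'i \<Rightarrow> complex"
  assumes "\<And>i. 0 \<le> ev i"
    and "no_inf_dim_bounded_subspace ev"
    and "E > 0"
    and "\<And>n. \<rho> n \<in> P_E ev E"
  shows "\<exists>r::nat \<Rightarrow> nat. strict_mono r \<and>
           (\<forall>\<epsilon>>0. \<exists>N. \<forall>m\<ge>N. \<forall>n\<ge>N. hs_norm (\<lambda>i j. \<rho> (r m) i j - \<rho> (r n) i j) < \<epsilon>)"
  unfolding hs_norm_diff_eq
proof (rule equismall_tails_imp_l2_Cauchy_subseq[of "\<lambda>n. case_prod (\<rho> n)"])
  show "cmod (case_prod (\<rho> n) z) \<le> 1" for n z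
    using assms(4)[of n] by (auto simp: P_E_def density_operator_entry_le_1 split: prod.split)
  show "\<exists>K. finite K \<and> (\<forall>n G. finite G \<longrightarrow> G \<inter> K = {} \<longrightarrow>
      (\<Sum>z\<in>G. (cmod (case_prod (\<rho> n) z))\<^sup>2) \<le> \<delta>)" if "0 < \<delta>" for \<delta>
  proof -
    obtain K where "finite K" and K: "\<forall>\<sigma>\<in>P_E ev E. \<forall>G. finite G \<longrightarrow> G \<inter> K = {} \<longrightarrow>
        (\<Sum>z\<in>G. (cmod (case_prod \<sigma> z))\<^sup>2) \<le> \<delta>"
      using P_E_hs_tails_uniformly_small[OF assms(1-3) \<open>0 < \<delta>\<close>] by blast
    with assms(4) show ?thesis by blast
  qed
qed

end
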